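(* Every critical model (of degree $2$, $3$ or $4$) is insoluble over $K$, i.e. the curve it defines has no $K$-rational point.
   Context: $K$ is a field with normalised discrete valuation $v$, valuation ring $\mathcal{O}_K$, uniformiser $\pi$, perfect residue field $k$. Critical models: (a) A generalised binary quartic $y^2+(lx^2+mxz+nz^2)y=ax^4+bx^3z+cx^2z^2+dxz^3+ez^4$ with coefficients in $\mathcal{O}_K$ is critical if $v(l)\ge1$, $v(m)\ge1$, $v(n)\ge2$, $v(a)=1$, $v(b)\ge2$, $v(c)\ge2$, $v(d)\ge3$, $v(e)=3$; its curve lies in the weighted projective plane $\mathbb{P}(1,1,2)$ with coordinates $x,z,y$. (b) A ternary cubic $F\in\mathcal{O}_K[x,y,z]$ is critical if its coefficients satisfy: $v(x^3)=0$, $v(x^2y)\ge1$, $v(xy^2)\ge1$, $v(y^3)=1$, $v(x^2z)\ge1$, $v(xyz)\ge1$, $v(y^2z)\ge2$, $v(xz^2)\ge2$, $v(yz^2)\ge2$, $v(z^3)=2$ (where $v(\text{monomial})$ denotes the valuation of its coefficient); its curve is $\{F=0\}\subset\mathbb{P}^2$. (c) A pair $(Q_1,Q_2)$ of quadratic forms in $x_1,\dots,x_4$ over $\mathcal{O}_K$ is critical if the reductions of $Q_1,Q_2$ mod $\pi$ are quadratic forms in $x_1,x_2$ only with no common root in $\mathbb{P}^1(\overline{k})$, and, putting $R_i(x_1,\dots,x_4)=\pi^{-1}Q_i(\pi x_1,\pi x_2,x_3,x_4)$, the reductions of $R_1,R_2$ mod $\pi$ are quadratic forms in $x_3,x_4$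 only with no common root in $\mathbb{P}^1(\overline{k})$; its curve is $\{Q_1=Q_2=0\}\subset\mathbb{P}^3$. *)

theory Defs
  imports Main "HOL-Computational_Algebra.Polynomial" "HOL-Computational_Algebra.Primes"
begin

text \<open>A valuation is a map v :: 'a => int; its value at 0 is irrelevant (0 has valuation
 infinity).  vge v x n means v(x) >= n (true for x = 0), veq v x n means v(x) = n.\<close>

definition vge :: "('a::field \<Rightarrow> int) \<Rightarrow> 'a \<Rightarrow> int \<Rightarrow> bool" where
  "vge v x n \<longleftrightarrow> x = 0 \<or> n \<le> v x"

definition veq :: "('a::field \<Rightarrow> int) \<Rightarrow> 'a \<Rightarrow> int \<Rightarrow> bool" where
  "veq v x n \<longleftrightarrow> x \<noteq> 0 \<and> v x = n"

definition normalised_dval :: "('a::field \<Rightarrow> int) \<Rightarrow> bool" where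
  "normalised_dval v \<longleftrightarrow>
     (\<forall>x y. x \<noteq> 0 \<longrightarrow> y \<noteq> 0 \<longrightarrow> v (x * y) = v x + v y) \<and>
     (\<forall>x y. x \<noteq> 0 \<longrightarrow> y \<noteq> 0 \<longrightarrow> x + y \<noteq> 0 \<longrightarrow> min (v x) (v y) \<le> v (x + y)) \<and>
     (\<exists>p. p \<noteq> 0 \<and> v p = 1)"

text \<open>The residue field O_K / (\<pi>) is perfect: if its characteristic is a prime p
 then every residue class is a p-th power.\<close>
definition perfect_residue_field :: "('a::field \<Rightarrow> int) \<Rightarrow> bool" where
  "perfect_residue_field v \<longleftrightarrow>
     (\<forall>p::nat. prime p \<longrightarrow> vge v (of_nat p) 1 \<longrightarrow>
        (\<forall>x. vge v x 0 \<longrightarrow> (\<exists>y. vge v y 0 \<and> vge v (x - y ^ p) 1)))"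

text \<open>It identifies the residue field k with a subfield
 of k', so k' contains an algebraic closure of k.\<close>
definition residue_embedding :: "('a::field \<Rightarrow> int) \<Rightarrow> ('a \<Rightarrow> 'k::alg_closed_field) \<Rightarrow> bool" where
  "residue_embedding v red \<longleftrightarrow>
     red 1 = 1 \<and>
     (\<forall>x y. vge v x 0 \<longrightarrow> vge v y 0 \<longrightarrow> red (x + y) = red x + red y) \<and>
     (\<forall>x y. vge v x 0 \<longrightarrow> vge v y 0 \<longrightarrow> red (x * y) = red x * red y) \<and>
     (\<forall>x. vge v x 0 \<longrightarrow> (red x = 0 \<longleftrightarrow> vge v x 1))"

definition critical_gbq ::
  "('a::field \<Rightarrow> int) \<Rightarrow> 'a \<Rightarrow> 'a \<Rightarrow> 'a \<Rightarrow> 'a \<Rightarrow> 'a \<Rightarrow> 'a \<Rightarrow> 'a \<Rightarrow> 'a \<Rightarrow> bool" where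
  "critical_gbq v l m n a b c d e \<longleftrightarrow>
     vge v l 1 \<and> vge v m 1 \<and> vge v n 2 \<and> veq v a 1 \<and> vge v b 2 \<and> vge v c 2 \<and>
     vge v d 3 \<and> veq v e 3"

text \<open>K-rational point of the curve in P(1,1,2) (coordinates x,z,y): a nonzero solution.\<close>
definition gbq_soluble :: "'a::field \<Rightarrow> 'a \<Rightarrow> 'a \<Rightarrow> 'a \<Rightarrow> 'a \<Rightarrow> 'a \<Rightarrow> 'a \<Rightarrow> 'a \<Rightarrow> bool" where
  "gbq_soluble l m n a b c d e \<longleftrightarrow>
     (\<exists>x z y. (x, z, y) \<noteq> (0, 0, 0) \<and>
        y^2 + (l*x^2 + m*x*z + n*z^2) * y =
        a*x^4 + b*x^3*z + c*x^2*z^2 + d*x*z^3 + e*z^4)"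

definition tcubic_eval :: "(nat \<Rightarrow> nat \<Rightarrow> nat \<Rightarrow> 'a::field) \<Rightarrow> 'a \<Rightarrow> 'a \<Rightarrow> 'a \<Rightarrow> 'a" where
  "tcubic_eval F x y z = (\<Sum>i\<le>3. \<Sum>j\<le>3 - i. F i j (3 - i - j) * x^i * y^j * z^(3 - i - j))"

definition critical_tcubic :: "('a::field \<Rightarrow> int) \<Rightarrow> (nat \<Rightarrow> nat \<Rightarrow> nat \<Rightarrow> 'a) \<Rightarrow> bool" where
  "critical_tcubic v F \<longleftrightarrow>
     veq v (F 3 0 0) 0 \<and> vge v (F 2 1 0) 1 \<and> vge v (F 1 2 0) 1 \<and> veq v (F 0 3 0) 1 \<and>
     vge v (F 2 0 1) 1 \<and> vge v (F 1 1 1) 1 \<and> vge v (F 0 2 1) 2 \<and> vge v (F 1 0 2) 2 \<and>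
     vge v (F 0 1 2) 2 \<and> veq v (F 0 0 3) 2"

definition tcubic_soluble :: "(nat \<Rightarrow> nat \<Rightarrow> nat \<Rightarrow> 'a::field) \<Rightarrow> bool" where
  "tcubic_soluble F \<longleftrightarrow> (\<exists>x y z. (x, y, z) \<noteq> (0, 0, 0) \<and> tcubic_eval F x y z = 0)"

definition qform_eval :: "(nat \<Rightarrow> nat \<Rightarrow> 'a::field) \<Rightarrow> (nat \<Rightarrow> 'a) \<Rightarrow> 'a" where
  "qform_eval Q x = (\<Sum>i\<in>{1..4}. \<Sum>j\<in>{i..4}. Q i j * x i * x j)"

definition no_common_root :: "'k::field \<Rightarrow> 'k \<Rightarrow> 'k \<Rightarrow> 'k \<Rightarrow> 'k \<Rightarrow> 'k \<Rightarrow> bool" where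
  "no_common_root a1 b1 c1 a2 b2 c2 \<longleftrightarrow>
     \<not> (\<exists>s t. (s, t) \<noteq> (0, 0) \<and>
            a1*s^2 + b1*s*t + c1*t^2 = 0 \<and> a2*s^2 + b2*s*t + c2*t^2 = 0)"

text \<open>R(x) = \<pi>^-1 Q(\<pi> x1, \<pi> x2, x3, x4), as a coefficient function.\<close>
definition qform_R :: "'a::field \<Rightarrow> (nat \<Rightarrow> nat \<Rightarrow> 'a) \<Rightarrow> nat \<Rightarrow> nat \<Rightarrow> 'a" where
  "qform_R \<pi> Q i j = Q i j * \<pi> ^ ((if i \<le> 2 then 1 else 0) + (if j \<le> 2 then 1 else 0)) / \<pi>"

definition critical_qpair ::
  "('a::field \<Rightarrow> int) \<Rightarrow> 'a \<Rightarrow> ('a \<Rightarrow> 'k::alg_closed_field) \<Rightarrow>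
   (nat \<Rightarrow> nat \<Rightarrow> 'a) \<Rightarrow> (nat \<Rightarrow> nat \<Rightarrow> 'a) \<Rightarrow> bool" where
  "critical_qpair v \<pi> red Q1 Q2 \<longleftrightarrow>
     \<comment> \<open>coefficients in O_K\<close>
     (\<forall>i\<in>{1..4}. \<forall>j\<in>{i..4}. vge v (Q1 i j) 0 \<and> vge v (Q2 i j) 0) \<and>
     \<comment> \<open>reductions of Q1, Q2 are forms in x1, x2 only\<close>
     (\<forall>i\<in>{1..4}. \<forall>j\<in>{i..4}. 3 \<le> j \<longrightarrow> vge v (Q1 i j) 1 \<and> vge v (Q2 i j) 1) \<and>
     no_common_root (red (Q1 1 1)) (red (Q1 1 2)) (red (Q1 2 2))
                    (red (Q2 1 1)) (red (Q2 1 2)) (red (Q2 2 2)) \<and>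
     \<comment> \<open>R1, R2 have coefficients in O_K and reductions are forms in x3, x4 only\<close>
     (\<forall>i\<in>{1..4}. \<forall>j\<in>{i..4}. vge v (qform_R \<pi> Q1 i j) 0 \<and> vge v (qform_R \<pi> Q2 i j) 0) \<and>
     (\<forall>i\<in>{1..4}. \<forall>j\<in>{i..4}. i \<le> 2 \<longrightarrow>
         vge v (qform_R \<pi> Q1 i j) 1 \<and> vge v (qform_R \<pi> Q2 i j) 1) \<and>
     no_common_root (red (qform_R \<pi> Q1 3 3)) (red (qform_R \<pi> Q1 3 4)) (red (qform_R \<pi> Q1 4 4))
                    (red (qform_R \<pi> Q2 3 3)) (red (qform_R \<pi> Q2 3 4)) (red (qform_R \<pi> Q2 4 4))"

definition qpair_soluble :: "(nat \<Rightarrow> nat \<Rightarrow> 'a::field) \<Rightarrow> (nat \<Rightarrow> nat \<Rightarrow> 'a) \<Rightarrow> bool" where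
  "qpair_soluble Q1 Q2 \<longleftrightarrow>
     (\<exists>x. (\<exists>i\<in>{1..4}. x i \<noteq> 0) \<and> qform_eval Q1 x = 0 \<and> qform_eval Q2 x = 0)"

end

theory Submission
  imports Defs
begin

text \<open>In each critical model the valuations of the coefficients are arranged so that, at any
  nonzero point, the pure power of the coordinate of least (suitably weighted) valuation has
  strictly smaller valuation than every other term. By the ultrametric inequality such a sum
  cannot vanish. For pairs of quadrics the dominant part is a binary quadratic form rather than a
  single monomial; that one of the two forms attains the expected valuation is exactly what the
  condition "no common root modulo \<pi>" guarantees.\<close>

lemma vge_mono: "vge v a p \<Longrightarrow> q \<le> p \<Longrightarrow> vge v a q"
  unfolding vge_def by auto

lemma vge_self: "vge v a (v a)"
  unfolding vge_def by auto

lemma veq_imp_vge: "veq v a n \<Longrightarrow> vge v a n"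
  unfolding vge_def veq_def by auto

definition binary_quadratic :: "'a::field \<Rightarrow> 'a \<Rightarrow> 'a \<Rightarrow> 'a \<Rightarrow> 'a \<Rightarrow> 'a" where
  "binary_quadratic a b c s t = a*s^2 + b*s*t + c*t^2"

lemma binary_quadratic_scale:
  "binary_quadratic a b c (u * s) (u * t) = u^2 * binary_quadratic a b c s t"
  unfolding binary_quadratic_def by algebra

lemma qform_eval_split:
  "qform_eval Q x = binary_quadratic (Q 1 1) (Q 1 2) (Q 2 2) (x 1) (x 2)
     + (Q 1 3 * x 1 * x 3 + Q 1 4 * x 1 * x 4 + Q 2 3 * x 2 * x 3 + Q 2 4 * x 2 * x 4)
     + binary_quadratic (Q 3 3) (Q 3 4) (Q 4 4) (x 3) (x 4)"
  by (simp add: qform_eval_def binary_quadratic_def eval_nat_numeral sum.atLeast_Suc_atMost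
      algebra_simps power2_eq_square)

lemma binary_quadratic_qform_R:
  "\<pi> \<noteq> 0 \<Longrightarrow> binary_quadratic (Q 3 3) (Q 3 4) (Q 4 4) s t
     = \<pi> * binary_quadratic (qform_R \<pi> Q 3 3) (qform_R \<pi> Q 3 4) (qform_R \<pi> Q 4 4) s t"
  by (simp add: binary_quadratic_def qform_R_def algebra_simps)

lemma minimal_coordinate_cases:
  fixes x :: "nat \<Rightarrow> 'a::field"
  assumes "\<exists>i\<in>{1..4}. x i \<noteq> 0"
  obtains (x12) u where "u \<in> {x 1, x 2}" "u \<noteq> 0" "\<forall>i\<in>{1..4}. vge v (x i) (v u)"
    | (x34) u where "u \<in> {x 3, x 4}" "u \<noteq> 0" "vge v (x 1) (v u + 1)" "vge v (x 2) (v u + 1)"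
        "vge v (x 3) (v u)" "vge v (x 4) (v u)"
proof -
  define I where "I = {i\<in>{1..4}. x i \<noteq> 0}"
  \<comment> \<open>Minimising w picks a least valuation, breaking ties in favour of x 1 and x 2.\<close>
  define w where "w i = 2 * v (x i) + (if i \<le> 2 then 0 else 1)" for i
  define i0 where "i0 = arg_min_on w I"
  have "finite I" and "I \<noteq> {}"
    using assms unfolding I_def by auto
  then have i0: "i0 \<in> {1..4}" "x i0 \<noteq> 0"
    and least: "\<And>i. i \<in> {1..4} \<Longrightarrow> x i \<noteq> 0 \<Longrightarrow> w i0 \<le> w i"
    using arg_min_if_finite(1)[of I w] arg_min_least[of I _ w] unfolding i0_def I_def by auto
  show thesis
  proof (cases "i0 \<le> 2")
    case True
    then have "x i0 \<in> {x 1, x 2}"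
      using i0(1) by (auto simp: le_Suc_eq numeral_2_eq_2)
    moreover have "vge v (x i) (v (x i0))" if "i \<in> {1..4}" for i
      using least[OF that] True unfolding vge_def w_def by (cases "i \<le> 2") (auto, presburger)
    ultimately show thesis
      using x12 i0(2) by blast
  next
    case False
    then have "x i0 \<in> {x 3, x 4}"
      using i0(1) by (auto simp: eval_nat_numeral le_Suc_eq)
    moreover have bound: "vge v (x i) (v (x i0) + (if i \<le> 2 then 1 else 0))"
      if "i \<in> {1..4}" for i
      using least[OF that] False unfolding vge_def w_def by (cases "i \<le> 2") (auto, presburger)
    ultimately show thesis
      using x34 i0(2) bound[of 1] bound[of 2] bound[of 3] bound[of 4] by simp
  qed
qed

context
  fixes v :: "'a::field \<Rightarrow> int"
  assumes nd: "normalised_dval v"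
begin

lemma v_mult: "x \<noteq> 0 \<Longrightarrow> y \<noteq> 0 \<Longrightarrow> v (x * y) = v x + v y"
  using nd unfolding normalised_dval_def by blast

lemma v_add_ge_min: "x \<noteq> 0 \<Longrightarrow> y \<noteq> 0 \<Longrightarrow> x + y \<noteq> 0 \<Longrightarrow> min (v x) (v y) \<le> v (x + y)"
  using nd unfolding normalised_dval_def by blast

lemma v_one: "v 1 = 0"
  using v_mult[of 1 1] by simp

lemma v_uminus: "v (- x) = v x"
proof -
  have "v (-1) = 0"
    using v_mult[of "-1" "-1"] v_one by simp
  then show ?thesis
    using v_mult[of "-1" x] by (cases "x = 0") auto
qed

lemma v_power: "x \<noteq> 0 \<Longrightarrow> v (x ^ k) = int k * v x"
  by (induction k) (simp_all add: v_one v_mult algebra_simps)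

lemma v_monomial: "c \<noteq> 0 \<Longrightarrow> x \<noteq> 0 \<Longrightarrow> v (c * x ^ k) = v c + int k * v x"
  by (simp add: v_mult v_power)

lemma vge_add: "vge v a n \<Longrightarrow> vge v b n \<Longrightarrow> vge v (a + b) n"
  unfolding vge_def using v_add_ge_min[of a b] by fastforce

lemma vge_uminus: "vge v a n \<Longrightarrow> vge v (- a) n"
  unfolding vge_def by (simp add: v_uminus)

lemma vge_diff: "vge v a n \<Longrightarrow> vge v b n \<Longrightarrow> vge v (a - b) n"
  using vge_add[of a n "- b"] vge_uminus[of b n] by simp

lemma vge_mult: "vge v a p \<Longrightarrow> vge v b q \<Longrightarrow> vge v (a * b) (p + q)"
  unfolding vge_def using v_mult[of a b] by (cases "a = 0"; cases "b = 0") auto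

lemma vge_power: "vge v a p \<Longrightarrow> vge v (a ^ k) (int k * p)"
  unfolding vge_def using v_power[of a k] v_one by (cases "a = 0"; cases "k = 0") auto

lemma veq_mult: "veq v a p \<Longrightarrow> veq v b q \<Longrightarrow> veq v (a * b) (p + q)"
  unfolding veq_def by (simp add: v_mult)

lemma add_ne_zero_if_dominant:
  assumes "veq v t n" and "vge v r m" and "n < m"
  shows "t + r \<noteq> 0"
proof
  assume "t + r = 0"
  then have "r = - t"
    by (simp add: add_eq_0_iff2)
  with assms show False
    unfolding vge_def veq_def by (simp add: v_uminus)
qed

lemma gbq_no_nonzero_solution_if_critical:
  assumes crit: "critical_gbq v l m n a b c d e"
    and eq: "y^2 + (l*x^2 + m*x*z + n*z^2) * y = a*x^4 + b*x^3*z + c*x^2*z^2 + d*x*z^3 + e*z^4"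
    and nonzero: "(x, z, y) \<noteq> (0, 0, 0)"
  shows False
proof -
  from crit have hl: "vge v l 1" and hm: "vge v m 1" and hn: "vge v n 2" and ha: "veq v a 1"
    and hb: "vge v b 2" and hc: "vge v c 2" and hd: "vge v d 3" and he: "veq v e 3"
    unfolding critical_gbq_def by auto
  have ha': "vge v a 1" and he': "vge v e 3"
    using ha he by (auto intro: veq_imp_vge)
  define L where "L = l*x^2 + m*x*z + n*z^2"
  have eq: "y^2 + L * y = a*x^4 + b*x^3*z + c*x^2*z^2 + d*x*z^3 + e*z^4"
    using eq unfolding L_def .
  consider (X) "x \<noteq> 0" "vge v z (v x)" | (Z) "z \<noteq> 0" "vge v x (v z + 1)" | (O) "x = 0" "z = 0"
    unfolding vge_def by force
  then show False
  proof cases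
    case X
    define X where "X = v x"
    have hx: "vge v x X" and hz: "vge v z X"
      using X vge_self unfolding X_def by auto
    have hL: "vge v L (1 + 2*X)"
      unfolding L_def
      by (intro vge_add; rule vge_mono, (rule vge_mult vge_power hl hm hn hx hz)+, simp)
    consider (small_y) "y \<noteq> 0" "v y \<le> 2*X" | (large_y) "vge v y (2*X + 1)"
      unfolding vge_def by force
    then show False
    proof cases
      case small_y
      let ?t = "y^2" and ?r = "L * y - (a*x^4 + b*x^3*z + c*x^2*z^2 + d*x*z^3 + e*z^4)"
      have "?t + ?r = 0"
        using eq by algebra
      moreover have "veq v ?t (2 * v y)"
        using small_y by (simp add: veq_def v_power)
      moreover have "vge v ?r (2 * v y + 1)"
        using small_y(2)
        by - (intro vge_add vge_diff; rule vge_mono,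
            (rule vge_mult vge_power hL ha' hb hc hd he' hx hz vge_self[of v y])+, simp)
      ultimately show False
        using add_ne_zero_if_dominant[of ?t _ ?r] by fastforce
    next
      case large_y
      let ?t = "a*x^4" and ?r = "b*x^3*z + c*x^2*z^2 + d*x*z^3 + e*z^4 - y^2 - L*y"
      have "?t + ?r = 0"
        using eq by algebra
      moreover have "veq v ?t (1 + 4 * X)"
        using ha X unfolding veq_def X_def by (simp add: v_monomial)
      moreover have "vge v ?r (2 + 4 * X)"
        by (intro vge_add vge_diff; rule vge_mono,
            (rule vge_mult vge_power hL ha' hb hc hd he' hx hz large_y)+, simp)
      ultimately show False
        using add_ne_zero_if_dominant[of ?t _ ?r] by fastforce
    qed
  next
    case Z
    define Z where "Z = v z"
    have hx: "vge v x (Z + 1)" and hz: "vge v z Z"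
      using Z vge_self unfolding Z_def by auto
    have hL: "vge v L (2 + 2*Z)"
      unfolding L_def
      by (intro vge_add; rule vge_mono, (rule vge_mult vge_power hl hm hn hx hz)+, simp)
    consider (small_y) "y \<noteq> 0" "v y \<le> 2*Z + 1" | (large_y) "vge v y (2*Z + 2)"
      unfolding vge_def by force
    then show False
    proof cases
      case small_y
      let ?t = "y^2" and ?r = "L * y - (a*x^4 + b*x^3*z + c*x^2*z^2 + d*x*z^3 + e*z^4)"
      have "?t + ?r = 0"
        using eq by algebra
      moreover have "veq v ?t (2 * v y)"
        using small_y by (simp add: veq_def v_power)
      moreover have "vge v ?r (2 * v y + 1)"
        using small_y(2)
        by - (intro vge_add vge_diff; rule vge_mono,
            (rule vge_mult vge_power hL ha' hb hc hd he' hx hz vge_self[of v y])+, simp)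
      ultimately show False
        using add_ne_zero_if_dominant[of ?t _ ?r] by fastforce
    next
      case large_y
      let ?t = "e*z^4" and ?r = "a*x^4 + b*x^3*z + c*x^2*z^2 + d*x*z^3 - y^2 - L*y"
      have "?t + ?r = 0"
        using eq by algebra
      moreover have "veq v ?t (3 + 4 * Z)"
        using he Z unfolding veq_def Z_def by (simp add: v_monomial)
      moreover have "vge v ?r (4 + 4 * Z)"
        by (intro vge_add vge_diff; rule vge_mono,
            (rule vge_mult vge_power hL ha' hb hc hd he' hx hz large_y)+, simp)
      ultimately show False
        using add_ne_zero_if_dominant[of ?t _ ?r] by fastforce
    qed
  next
    case O
    then show False
      using eq nonzero unfolding L_def by simp
  qed
qed

lemma tcubic_no_nonzero_solution_if_critical:
  assumes crit: "critical_tcubic v F"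
    and eq: "tcubic_eval F x y z = 0"
    and nonzero: "(x, y, z) \<noteq> (0, 0, 0)"
  shows False
proof -
  from crit have h300: "veq v (F 3 0 0) 0" and h210: "vge v (F 2 1 0) 1"
    and h120: "vge v (F 1 2 0) 1" and h030: "veq v (F 0 3 0) 1" and h201: "vge v (F 2 0 1) 1"
    and h111: "vge v (F 1 1 1) 1" and h021: "vge v (F 0 2 1) 2" and h102: "vge v (F 1 0 2) 2"
    and h012: "vge v (F 0 1 2) 2" and h003: "veq v (F 0 0 3) 2"
    unfolding critical_tcubic_def by auto
  have h300': "vge v (F 3 0 0) 0" and h030': "vge v (F 0 3 0) 1" and h003': "vge v (F 0 0 3) 2"
    using h300 h030 h003 by (auto intro: veq_imp_vge)
  note hF = h210 h120 h201 h111 h021 h102 h012 h300' h030' h003'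
  have eq: "F 3 0 0 * x^3 + F 2 1 0 * x^2*y + F 2 0 1 * x^2*z + F 1 2 0 * x*y^2 + F 1 1 1 * x*y*z
      + F 1 0 2 * x*z^2 + F 0 3 0 * y^3 + F 0 2 1 * y^2*z + F 0 1 2 * y*z^2 + F 0 0 3 * z^3 = 0"
    using eq by (simp add: tcubic_eval_def eval_nat_numeral algebra_simps)
  consider (X) "x \<noteq> 0" "vge v y (v x)" "vge v z (v x)"
    | (Y) "y \<noteq> 0" "vge v x (v y + 1)" "vge v z (v y)"
    | (Z) "z \<noteq> 0" "vge v x (v z + 1)" "vge v y (v z + 1)"
    using nonzero unfolding vge_def by force
  then show False
  proof cases
    case X
    let ?t = "F 3 0 0 * x^3"
    let ?r = "F 2 1 0 * x^2*y + F 2 0 1 * x^2*z + F 1 2 0 * x*y^2 + F 1 1 1 * x*y*z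
      + F 1 0 2 * x*z^2 + F 0 3 0 * y^3 + F 0 2 1 * y^2*z + F 0 1 2 * y*z^2 + F 0 0 3 * z^3"
    have "?t + ?r = 0"
      using eq by algebra
    moreover have "veq v ?t (3 * v x)"
      using h300 X unfolding veq_def by (simp add: v_monomial)
    moreover have "vge v ?r (3 * v x + 1)"
      by (intro vge_add; rule vge_mono, (rule vge_mult vge_power hF vge_self[of v x] X)+, simp)
    ultimately show False
      using add_ne_zero_if_dominant[of ?t _ ?r] by fastforce
  next
    case Y
    let ?t = "F 0 3 0 * y^3"
    let ?r = "F 3 0 0 * x^3 + F 2 1 0 * x^2*y + F 2 0 1 * x^2*z + F 1 2 0 * x*y^2 + F 1 1 1 * x*y*z
      + F 1 0 2 * x*z^2 + F 0 2 1 * y^2*z + F 0 1 2 * y*z^2 + F 0 0 3 * z^3"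
    have "?t + ?r = 0"
      using eq by algebra
    moreover have "veq v ?t (1 + 3 * v y)"
      using h030 Y unfolding veq_def by (simp add: v_monomial)
    moreover have "vge v ?r (2 + 3 * v y)"
      by (intro vge_add; rule vge_mono, (rule vge_mult vge_power hF vge_self[of v y] Y)+, simp)
    ultimately show False
      using add_ne_zero_if_dominant[of ?t _ ?r] by fastforce
  next
    case Z
    let ?t = "F 0 0 3 * z^3"
    let ?r = "F 3 0 0 * x^3 + F 2 1 0 * x^2*y + F 2 0 1 * x^2*z + F 1 2 0 * x*y^2 + F 1 1 1 * x*y*z
      + F 1 0 2 * x*z^2 + F 0 3 0 * y^3 + F 0 2 1 * y^2*z + F 0 1 2 * y*z^2"
    have "?t + ?r = 0"
      using eq by algebra
    moreover have "veq v ?t (2 + 3 * v z)"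
      using h003 Z unfolding veq_def by (simp add: v_monomial)
    moreover have "vge v ?r (3 + 3 * v z)"
      by (intro vge_add; rule vge_mono, (rule vge_mult vge_power hF vge_self[of v z] Z)+, simp)
    ultimately show False
      using add_ne_zero_if_dominant[of ?t _ ?r] by fastforce
  qed
qed

lemma red_zero: "residue_embedding v red \<Longrightarrow> red 0 = 0"
  unfolding residue_embedding_def vge_def by simp

lemma red_binary_quadratic:
  assumes re: "residue_embedding v red"
    and "vge v a 0" "vge v b 0" "vge v c 0" "vge v s 0" "vge v t 0"
  shows "red (binary_quadratic a b c s t)
    = binary_quadratic (red a) (red b) (red c) (red s) (red t)"
proof -
  have add: "red (p + q) = red p + red q" and mult: "red (p * q) = red p * red q"
    if "vge v p 0" "vge v q 0" for p q
    using re that unfolding residue_embedding_def by auto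
  have int: "vge v (a*s^2) 0" "vge v (b*s*t) 0" "vge v (c*t^2) 0" "vge v (b*s) 0"
    "vge v (s^2) 0" "vge v (t^2) 0"
    by (rule vge_mono, (rule vge_mult vge_power assms)+, simp)+
  have "red (a*s^2 + b*s*t + c*t^2) = red (a*s^2) + red (b*s*t) + red (c*t^2)"
    using add[OF vge_add[OF int(1,2)] int(3)] add[OF int(1,2)] by simp
  also have "\<dots> = red a * red (s^2) + red b * red s * red t + red c * red (t^2)"
    using mult[OF assms(2) int(5)] mult[OF int(4) assms(6)] mult[OF assms(3,5)]
      mult[OF assms(4) int(6)] by simp
  also have "\<dots> = binary_quadratic (red a) (red b) (red c) (red s) (red t)"
    using mult[OF assms(5,5)] mult[OF assms(6,6)]
    by (simp add: binary_quadratic_def power2_eq_square)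
  finally show ?thesis
    unfolding binary_quadratic_def .
qed

lemma vge_divide: "u \<noteq> 0 \<Longrightarrow> vge v s (v u) \<Longrightarrow> vge v (s / u) 0"
  unfolding vge_def using v_mult[of "s / u" u] by (cases "s = 0") auto

lemma binary_quadratics_exact_valuation:
  assumes re: "residue_embedding v red"
    and int: "vge v a1 0" "vge v b1 0" "vge v c1 0" "vge v a2 0" "vge v b2 0" "vge v c2 0"
    and no_root: "no_common_root (red a1) (red b1) (red c1) (red a2) (red b2) (red c2)"
    and u: "u \<in> {s, t}" "u \<noteq> 0" "vge v s (v u)" "vge v t (v u)"
  shows "veq v (binary_quadratic a1 b1 c1 s t) (2 * v u)
    \<or> veq v (binary_quadratic a2 b2 c2 s t) (2 * v u)"
proof -
  define s' t' where "s' = s / u" and "t' = t / u"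
  have st: "s = u * s'" "t = u * t'" and int_st: "vge v s' 0" "vge v t' 0"
    using u vge_divide unfolding s'_def t'_def by auto
  have "s' = 1 \<or> t' = 1"
    using u unfolding s'_def t'_def by auto
  then have "(red s', red t') \<noteq> (0, 0)"
    using re unfolding residue_embedding_def by auto
  with no_root have "red (binary_quadratic a1 b1 c1 s' t') \<noteq> 0
      \<or> red (binary_quadratic a2 b2 c2 s' t') \<noteq> 0"
    using red_binary_quadratic[OF re int(1-3) int_st] red_binary_quadratic[OF re int(4-6) int_st]
    unfolding no_common_root_def binary_quadratic_def by auto
  moreover have "veq v (binary_quadratic a b c s t) (2 * v u)"
    if "vge v a 0" "vge v b 0" "vge v c 0" "red (binary_quadratic a b c s' t') \<noteq> 0" for a b c
  proof -
    have "vge v (binary_quadratic a b c s' t') 0"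
      unfolding binary_quadratic_def
      by (intro vge_add; rule vge_mono, (rule vge_mult vge_power that int_st)+, simp)
    with that(4) have "veq v (binary_quadratic a b c s' t') 0"
      using re red_zero[OF re] unfolding residue_embedding_def veq_def vge_def by auto
    moreover have "veq v (u^2) (2 * v u)"
      using u(2) by (simp add: veq_def v_power)
    ultimately have "veq v (u^2 * binary_quadratic a b c s' t') (2 * v u)"
      using veq_mult by fastforce
    then show ?thesis
      unfolding st binary_quadratic_scale .
  qed
  ultimately show ?thesis
    using int by blast
qed

lemma qform_ne_zero_if_x12_part_dominates:
  assumes hQ: "\<forall>i\<in>{1..4}. \<forall>j\<in>{i..4}. 3 \<le> j \<longrightarrow> vge v (Q i j) 1"
    and hx: "\<forall>i\<in>{1..4}. vge v (x i) A"
    and dominant: "veq v (binary_quadratic (Q 1 1) (Q 1 2) (Q 2 2) (x 1) (x 2)) (2 * A)"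
  shows "qform_eval Q x \<noteq> 0"
proof -
  have "vge v (Q 1 3) 1" "vge v (Q 1 4) 1" "vge v (Q 2 3) 1" "vge v (Q 2 4) 1"
    "vge v (Q 3 3) 1" "vge v (Q 3 4) 1" "vge v (Q 4 4) 1"
    and "vge v (x 1) A" "vge v (x 2) A" "vge v (x 3) A" "vge v (x 4) A"
    using hQ hx by auto
  then have "vge v ((Q 1 3 * x 1 * x 3 + Q 1 4 * x 1 * x 4 + Q 2 3 * x 2 * x 3 + Q 2 4 * x 2 * x 4)
      + binary_quadratic (Q 3 3) (Q 3 4) (Q 4 4) (x 3) (x 4)) (2 * A + 1)"
    unfolding binary_quadratic_def
    by - (intro vge_add; rule vge_mono, (assumption | rule vge_mult vge_power)+, simp)
  then show ?thesis
    using add_ne_zero_if_dominant[OF dominant] by (simp add: qform_eval_split add.assoc)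
qed

lemma qform_ne_zero_if_x34_part_dominates:
  assumes \<pi>: "v \<pi> = 1" "\<pi> \<noteq> 0"
    and hQ: "\<forall>i\<in>{1..4}. \<forall>j\<in>{i..4}. vge v (Q i j) 0"
      "\<forall>i\<in>{1..4}. \<forall>j\<in>{i..4}. 3 \<le> j \<longrightarrow> vge v (Q i j) 1"
    and hx: "vge v (x 1) (B + 1)" "vge v (x 2) (B + 1)" "vge v (x 3) B" "vge v (x 4) B"
    and dominant: "veq v (binary_quadratic (qform_R \<pi> Q 3 3) (qform_R \<pi> Q 3 4) (qform_R \<pi> Q 4 4)
      (x 3) (x 4)) (2 * B)"
  shows "qform_eval Q x \<noteq> 0"
proof -
  have "veq v \<pi> 1"
    using \<pi> by (simp add: veq_def)
  from veq_mult[OF this dominant]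
  have "veq v (binary_quadratic (Q 3 3) (Q 3 4) (Q 4 4) (x 3) (x 4)) (1 + 2 * B)"
    unfolding binary_quadratic_qform_R[OF \<pi>(2), where Q = Q] .
  moreover have "vge v (Q 1 1) 0" "vge v (Q 1 2) 0" "vge v (Q 2 2) 0"
    "vge v (Q 1 3) 1" "vge v (Q 1 4) 1" "vge v (Q 2 3) 1" "vge v (Q 2 4) 1"
    using hQ by auto
  then have "vge v (binary_quadratic (Q 1 1) (Q 1 2) (Q 2 2) (x 1) (x 2)
      + (Q 1 3 * x 1 * x 3 + Q 1 4 * x 1 * x 4 + Q 2 3 * x 2 * x 3 + Q 2 4 * x 2 * x 4)) (2 * B + 2)"
    unfolding binary_quadratic_def
    by - (intro vge_add; rule vge_mono, (assumption | rule vge_mult vge_power hx)+, simp)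
  ultimately show ?thesis
    using add_ne_zero_if_dominant[of _ "1 + 2 * B" _ "2 * B + 2"]
    unfolding qform_eval_split by (simp add: add.commute)
qed

lemma qpair_no_nonzero_solution_if_critical:
  assumes re: "residue_embedding v red" and \<pi>: "v \<pi> = 1" "\<pi> \<noteq> 0"
    and crit: "critical_qpair v \<pi> red Q1 Q2"
    and nonzero: "\<exists>i\<in>{1..4}. x i \<noteq> 0"
    and eq: "qform_eval Q1 x = 0" "qform_eval Q2 x = 0"
  shows False
proof -
  have integral: "\<forall>i\<in>{1..4}. \<forall>j\<in>{i..4}. vge v (Q i j) 0"
    and x34_divisible: "\<forall>i\<in>{1..4}. \<forall>j\<in>{i..4}. 3 \<le> j \<longrightarrow> vge v (Q i j) 1"
    and R_integral: "\<forall>i\<in>{1..4}. \<forall>j\<in>{i..4}. vge v (qform_R \<pi> Q i j) 0"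
    if "Q \<in> {Q1, Q2}" for Q
    using crit that unfolding critical_qpair_def by auto
  have int_12: "vge v (Q 1 1) 0" "vge v (Q 1 2) 0" "vge v (Q 2 2) 0"
    and int_34: "vge v (qform_R \<pi> Q 3 3) 0" "vge v (qform_R \<pi> Q 3 4) 0"
      "vge v (qform_R \<pi> Q 4 4) 0"
    if "Q \<in> {Q1, Q2}" for Q
    using integral[OF that] R_integral[OF that] by auto
  from crit have no_root_12: "no_common_root (red (Q1 1 1)) (red (Q1 1 2)) (red (Q1 2 2))
      (red (Q2 1 1)) (red (Q2 1 2)) (red (Q2 2 2))"
    and no_root_34: "no_common_root
      (red (qform_R \<pi> Q1 3 3)) (red (qform_R \<pi> Q1 3 4)) (red (qform_R \<pi> Q1 4 4))
      (red (qform_R \<pi> Q2 3 3)) (red (qform_R \<pi> Q2 3 4)) (red (qform_R \<pi> Q2 4 4))"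
    unfolding critical_qpair_def by auto
  from nonzero show False
  proof (cases rule: minimal_coordinate_cases[where v = v])
    case (x12 u)
    have "vge v (x 1) (v u)" "vge v (x 2) (v u)"
      using x12(3) by auto
    from binary_quadratics_exact_valuation[OF re int_12[OF insertI1]
        int_12[OF insertI2, OF singletonI] no_root_12 x12(1,2) this]
    have "\<exists>Q\<in>{Q1, Q2}. veq v (binary_quadratic (Q 1 1) (Q 1 2) (Q 2 2) (x 1) (x 2)) (2 * v u)"
      by auto
    then obtain Q where "Q \<in> {Q1, Q2}"
      and "veq v (binary_quadratic (Q 1 1) (Q 1 2) (Q 2 2) (x 1) (x 2)) (2 * v u)"
      by blast
    then have "qform_eval Q x \<noteq> 0"
      using qform_ne_zero_if_x12_part_dominates[OF x34_divisible x12(3)] by blast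
    with \<open>Q \<in> {Q1, Q2}\<close> eq show False
      by auto
  next
    case (x34 u)
    have "\<exists>Q\<in>{Q1, Q2}. veq v (binary_quadratic
        (qform_R \<pi> Q 3 3) (qform_R \<pi> Q 3 4) (qform_R \<pi> Q 4 4) (x 3) (x 4)) (2 * v u)"
      using binary_quadratics_exact_valuation[OF re int_34[OF insertI1]
          int_34[OF insertI2, OF singletonI] no_root_34 x34(1,2,5,6)]
      by auto
    then obtain Q where "Q \<in> {Q1, Q2}" and "veq v (binary_quadratic
        (qform_R \<pi> Q 3 3) (qform_R \<pi> Q 3 4) (qform_R \<pi> Q 4 4) (x 3) (x 4)) (2 * v u)"
      by blast
    then have "qform_eval Q x \<noteq> 0"
      using qform_ne_zero_if_x34_part_dominates[OF \<pi> integral x34_divisible x34(3-6)] by blast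
    with \<open>Q \<in> {Q1, Q2}\<close> eq show False
      by auto
  qed
qed

end

theorem lemma5p2:
  fixes v :: "'a::field \<Rightarrow> int" and \<pi> :: 'a and red :: "'a \<Rightarrow> 'k::alg_closed_field"
  assumes "normalised_dval v"
    and "perfect_residue_field v"
    and "v \<pi> = 1" and "\<pi> \<noteq> 0"
    and "residue_embedding v red"
  shows "(\<forall>l m n a b c d e. critical_gbq v l m n a b c d e \<longrightarrow> \<not> gbq_soluble l m n a b c d e) \<and>
         (\<forall>F. critical_tcubic v F \<longrightarrow> \<not> tcubic_soluble F) \<and>
         (\<forall>Q1 Q2. critical_qpair v \<pi> red Q1 Q2 \<longrightarrow> \<not> qpair_soluble Q1 Q2)"
  using gbq_no_nonzero_solution_if_critical[OF assms(1)]
    tcubic_no_nonzero_solution_if_critical[OF assms(1)]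
    qpair_no_nonzero_solution_if_critical[OF assms(1,5,3,4)]
  unfolding gbq_soluble_def tcubic_soluble_def qpair_soluble_def by blast

end
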